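(* Let $G=(V,E)$ be a finite simple graph with $|V|\ge1$ and minimum degree $\delta(G)\ge1$, whose vertices operate independently, vertex $v$ with probability $p_v$, and let $q_v=1-p_v$, $\mathbf{p}=(p_v)_{v\in V}$. Then \[ \operatorname{DRel}(G,\mathbf{p})=\sum_{\substack{J\subseteq V\\ |J|\le|V|-\delta(G)}}(-1)^{|J|}\prod_{v\in N_G[J]}q_v+(-1)^{|V|-\delta(G)+1}\binom{|V|-1}{\delta(G)-1}\prod_{v\in V}q_v. \]
   Context: $\operatorname{DRel}(G,\mathbf{p})$ is the probability that the set of operating vertices is a dominating set of $G$ (every vertex not in the set is adjacent to a vertex in it); edges never fail. $N_G[J]$ is the closed neighbourhood of $J$ (vertices in $J$ or adjacent to a vertex of $J$). $\delta(G)$ is the minimum degree of $G$. *)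

theory Defs
  imports Complex_Main
begin

definition simple_graph :: "'a set \<Rightarrow> ('a \<Rightarrow> 'a \<Rightarrow> bool) \<Rightarrow> bool" where
  "simple_graph V E \<longleftrightarrow> finite V \<and> (\<forall>u\<in>V. \<forall>v\<in>V. E u v \<longleftrightarrow> E v u) \<and> (\<forall>v\<in>V. \<not> E v v)"

definition degree :: "'a set \<Rightarrow> ('a \<Rightarrow> 'a \<Rightarrow> bool) \<Rightarrow> 'a \<Rightarrow> nat" where
  "degree V E v = card {u\<in>V. E v u}"

definition min_degree :: "'a set \<Rightarrow> ('a \<Rightarrow> 'a \<Rightarrow> bool) \<Rightarrow> nat" where
  "min_degree V E = Min (degree V E ` V)"

definition closed_nbhd :: "'a set \<Rightarrow> ('a \<Rightarrow> 'a \<Rightarrow> bool) \<Rightarrow> 'a set \<Rightarrow> 'a set" where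
  "closed_nbhd V E J = J \<union> {v\<in>V. \<exists>u\<in>J. E u v}"

definition dominating_set :: "'a set \<Rightarrow> ('a \<Rightarrow> 'a \<Rightarrow> bool) \<Rightarrow> 'a set \<Rightarrow> bool" where
  "dominating_set V E S \<longleftrightarrow> S \<subseteq> V \<and> (\<forall>v\<in>V - S. \<exists>u\<in>S. E v u)"

text \<open>Domination reliability: probability that the set of operating vertices
  (vertex v operates independently with probability p v) is dominating.\<close>
definition DRel :: "'a set \<Rightarrow> ('a \<Rightarrow> 'a \<Rightarrow> bool) \<Rightarrow> ('a \<Rightarrow> real) \<Rightarrow> real" where
  "DRel V E p = (\<Sum>S\<in>{S. S \<subseteq> V \<and> dominating_set V E S}.
      (\<Prod>v\<in>S. p v) * (\<Prod>v\<in>V - S. 1 - p v))"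

end

theory Submission
  imports Defs
begin

text \<open>
  Expanding each product \<open>\<Prod>v\<in>N[J]. q v\<close> over the states of the vertices outside
  \<open>N[J]\<close> and swapping the two sums, a state \<open>S\<close> receives the total weight
  \<open>\<Sum>J\<subseteq>U. (-1)^|J|\<close>, where \<open>U\<close> is the set of vertices not dominated by \<open>S\<close>; this
  vanishes unless \<open>U = {}\<close>, so the full inclusion-exclusion sum over all \<open>J \<subseteq> V\<close> is
  \<open>DRel\<close>. If \<open>|J| > |V| - \<delta>\<close>, then \<open>N[J] = V\<close>, since a vertex outside \<open>N[J]\<close> has at
  least \<open>\<delta> + 1\<close> vertices in its closed neighbourhood, all outside \<open>J\<close>. Hence the
  large sets all contribute \<open>\<Prod>v\<in>V. q v\<close> times \<open>\<Sum>(-1)^|J|\<close> over them, which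
  by the partial alternating binomial sum is \<open>(-1)^(|V|-\<delta>+1) (|V|-1 choose \<delta>-1)\<close>.
\<close>

lemma sum_atMost_neg_one_power_choose_Suc:
  "(\<Sum>k\<le>m. (-1)^k * real (Suc n choose k)) = (-1)^m * real (n choose m)"
  by (induction m) (auto simp: algebra_simps)

lemma sum_Pow_neg_one_power_card:
  assumes "finite U"
  shows "(\<Sum>J\<in>Pow U. (-1::real)^card J) = (if U = {} then 1 else 0)"
proof -
  have "(\<Prod>x\<in>U. (-1::real) + 1) = (\<Sum>X\<in>Pow U. (\<Prod>x\<in>X. -1) * (\<Prod>x\<in>U-X. 1))"
    by (rule prod_add[OF assms])
  then have "(\<Sum>J\<in>Pow U. (-1::real)^card J) = 0 ^ card U"
    by (simp add: prod_constant)
  then show ?thesis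
    using assms by (cases "U = {}") (auto simp: card_gt_0_iff)
qed

lemma sum_Pow_split_card:
  fixes f :: "'a set \<Rightarrow> 'b::comm_monoid_add"
  assumes "finite V"
  shows "sum f (Pow V) = sum f {J. J \<subseteq> V \<and> card J \<le> m} + sum f {J. J \<subseteq> V \<and> m < card J}"
proof -
  have "Pow V = {J. J \<subseteq> V \<and> card J \<le> m} \<union> {J. J \<subseteq> V \<and> m < card J}"
    by auto
  moreover have "finite {J. J \<subseteq> V \<and> card J \<le> m}" "finite {J. J \<subseteq> V \<and> m < card J}"
    using assms by (auto intro: finite_subset[of _ "Pow V"])
  ultimately show ?thesis
    by (simp add: sum.union_disjoint disjoint_iff)
qed

lemma sum_neg_one_power_card_subsets_le:
  assumes "finite V" "V \<noteq> {}"
  shows "(\<Sum>J | J \<subseteq> V \<and> card J \<le> m. (-1::real)^card J) = (-1)^m * real (card V - 1 choose m)"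
proof -
  have "(\<Sum>J | J \<subseteq> V \<and> card J \<le> m. (-1::real)^card J)
      = (\<Sum>k\<le>m. \<Sum>J\<in>{J \<in> {J. J \<subseteq> V \<and> card J \<le> m}. card J = k}. (-1::real)^card J)"
    by (rule sum.group[symmetric]) (use assms in \<open>auto intro: finite_subset[of _ "Pow V"]\<close>)
  also have "\<dots> = (\<Sum>k\<le>m. \<Sum>J | J \<subseteq> V \<and> card J = k. (-1::real)^card J)"
    by (intro sum.cong) auto
  also have "\<dots> = (\<Sum>k\<le>m. (-1)^k * real (Suc (card V - 1) choose k))"
    using assms by (simp add: n_subsets card_gt_0_iff mult.commute)
  finally show ?thesis
    by (simp only: sum_atMost_neg_one_power_choose_Suc)
qed

lemma sum_neg_one_power_card_subsets_gt:
  assumes "finite V" "V \<noteq> {}"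
  shows "(\<Sum>J | J \<subseteq> V \<and> m < card J. (-1::real)^card J) = (-1)^(m+1) * real (card V - 1 choose m)"
  using sum_Pow_split_card[OF assms(1), of "\<lambda>J. (-1::real)^card J" m]
    sum_Pow_neg_one_power_card[OF assms(1)] sum_neg_one_power_card_subsets_le[OF assms]
  by (simp add: assms(2))

lemma prod_one_minus_eq_sum_Pow_compl:
  fixes p :: "'a \<Rightarrow> 'b::comm_ring_1"
  assumes "finite A" "B \<subseteq> A"
  shows "(\<Prod>v\<in>B. 1 - p v) = (\<Sum>S\<in>Pow (A - B). (\<Prod>v\<in>S. p v) * (\<Prod>v\<in>A - S. 1 - p v))"
proof -
  have fin: "finite B" "finite (A - B)"
    using assms finite_subset by auto
  have "(\<Prod>v\<in>B. 1 - p v) = (\<Prod>v\<in>B. 1 - p v) * (\<Prod>v\<in>A - B. p v + (1 - p v))"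
    by simp
  also have "\<dots> = (\<Prod>v\<in>B. 1 - p v) * (\<Sum>S\<in>Pow (A - B). (\<Prod>v\<in>S. p v) * (\<Prod>v\<in>A - B - S. 1 - p v))"
    by (simp only: prod_add[OF fin(2)])
  also have "\<dots> = (\<Sum>S\<in>Pow (A - B). (\<Prod>v\<in>S. p v) * ((\<Prod>v\<in>A - B - S. 1 - p v) * (\<Prod>v\<in>B. 1 - p v)))"
    by (simp add: sum_distrib_left algebra_simps)
  also have "\<dots> = (\<Sum>S\<in>Pow (A - B). (\<Prod>v\<in>S. p v) * (\<Prod>v\<in>A - S. 1 - p v))"
  proof (rule sum.cong[OF refl])
    fix S assume "S \<in> Pow (A - B)"
    then have "A - S = (A - B - S) \<union> B" "(A - B - S) \<inter> B = {}"
      using assms by auto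
    then show "(\<Prod>v\<in>S. p v) * ((\<Prod>v\<in>A - B - S. 1 - p v) * (\<Prod>v\<in>B. 1 - p v))
        = (\<Prod>v\<in>S. p v) * (\<Prod>v\<in>A - S. 1 - p v)"
      using fin by (simp add: prod.union_disjoint)
  qed
  finally show ?thesis .
qed

definition undominated :: "'a set \<Rightarrow> ('a \<Rightarrow> 'a \<Rightarrow> bool) \<Rightarrow> 'a set \<Rightarrow> 'a set" where
  "undominated V E S = {v \<in> V - S. \<forall>u\<in>S. \<not> E v u}"

lemma dominating_set_iff_undominated_eq_empty:
  "dominating_set V E S \<longleftrightarrow> S \<subseteq> V \<and> undominated V E S = {}"
  by (auto simp: dominating_set_def undominated_def)

lemma subset_undominated_iff:
  assumes "\<forall>u\<in>V. \<forall>v\<in>V. E u v \<longleftrightarrow> E v u" "S \<subseteq> V"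
  shows "J \<subseteq> undominated V E S \<longleftrightarrow> J \<subseteq> V \<and> S \<inter> closed_nbhd V E J = {}"
  using assms by (auto simp: closed_nbhd_def undominated_def; blast)

lemma DRel_inclusion_exclusion:
  assumes fin: "finite V" and sym: "\<forall>u\<in>V. \<forall>v\<in>V. E u v \<longleftrightarrow> E v u"
  shows "DRel V E p = (\<Sum>J\<in>Pow V. (-1)^card J * (\<Prod>v\<in>closed_nbhd V E J. 1 - p v))"
proof -
  let ?w = "\<lambda>S. (\<Prod>v\<in>S. p v) * (\<Prod>v\<in>V - S. 1 - p v)"
  let ?N = "closed_nbhd V E"
  let ?avoids = "\<lambda>S J. S \<inter> ?N J = {}"
  have "(\<Sum>J\<in>Pow V. (-1)^card J * (\<Prod>v\<in>?N J. 1 - p v))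
      = (\<Sum>J\<in>Pow V. \<Sum>S\<in>Pow V. if ?avoids S J then (-1)^card J * ?w S else 0)"
  proof (rule sum.cong[OF refl])
    fix J assume "J \<in> Pow V"
    then have "?N J \<subseteq> V"
      by (auto simp: closed_nbhd_def)
    with fin have "(\<Prod>v\<in>?N J. 1 - p v) = (\<Sum>S\<in>Pow (V - ?N J). ?w S)"
      by (rule prod_one_minus_eq_sum_Pow_compl)
    also have "\<dots> = (\<Sum>S\<in>Pow V. if ?avoids S J then ?w S else 0)"
      using fin by (simp add: sum.inter_filter[symmetric]) (intro sum.cong; auto)
    finally show "(-1)^card J * (\<Prod>v\<in>?N J. 1 - p v)
        = (\<Sum>S\<in>Pow V. if ?avoids S J then (-1)^card J * ?w S else 0)"
      by (simp add: sum_distrib_left if_distrib cong: if_cong)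
  qed
  also have "\<dots> = (\<Sum>S\<in>Pow V. \<Sum>J\<in>Pow V. if ?avoids S J then (-1)^card J * ?w S else 0)"
    by (rule sum.swap)
  also have "\<dots> = (\<Sum>S\<in>Pow V. ?w S * (\<Sum>J\<in>Pow (undominated V E S). (-1)^card J))"
  proof (rule sum.cong[OF refl])
    fix S assume "S \<in> Pow V"
    then have "{J \<in> Pow V. ?avoids S J} = Pow (undominated V E S)"
      by (simp add: set_eq_iff subset_undominated_iff[OF sym])
    then show "(\<Sum>J\<in>Pow V. if ?avoids S J then (-1)^card J * ?w S else 0)
        = ?w S * (\<Sum>J\<in>Pow (undominated V E S). (-1)^card J)"
      using fin by (simp add: sum.inter_filter[symmetric] sum_distrib_right mult.commute)
  qed
  also have "\<dots> = (\<Sum>S\<in>Pow V. if undominated V E S = {} then ?w S else 0)"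
    using fin by (intro sum.cong) (auto simp: sum_Pow_neg_one_power_card undominated_def)
  also have "\<dots> = (\<Sum>S | S \<subseteq> V \<and> dominating_set V E S. ?w S)"
    using fin by (simp add: sum.inter_filter[symmetric] dominating_set_iff_undominated_eq_empty)
  finally show ?thesis
    by (simp add: DRel_def)
qed

lemma min_degree_le_degree:
  assumes "finite V" "v \<in> V"
  shows "min_degree V E \<le> degree V E v"
  unfolding min_degree_def using assms by (intro Min_le) auto

lemma min_degree_le_card_minus_one:
  assumes "simple_graph V E" "V \<noteq> {}"
  shows "min_degree V E \<le> card V - 1"
proof -
  have fin: "finite V"
    using assms(1) by (simp add: simple_graph_def)
  have "min_degree V E \<in> degree V E ` V"
    unfolding min_degree_def using fin assms(2) by (intro Min_in) auto
  then obtain v where v: "v \<in> V" "min_degree V E = degree V E v"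
    by auto
  have "{u \<in> V. E v u} \<subseteq> V - {v}"
    using assms(1) v(1) by (auto simp: simple_graph_def)
  then have "degree V E v \<le> card (V - {v})"
    unfolding degree_def using fin by (intro card_mono) auto
  then show ?thesis
    using v fin by simp
qed

lemma closed_nbhd_eq_if_card_gt:
  assumes G: "simple_graph V E" and "J \<subseteq> V" and card_J: "card V - min_degree V E < card J"
  shows "closed_nbhd V E J = V"
proof (rule ccontr)
  have fin: "finite V" and irrefl: "\<forall>v\<in>V. \<not> E v v"
    using G by (auto simp: simple_graph_def)
  assume "closed_nbhd V E J \<noteq> V"
  moreover have "closed_nbhd V E J \<subseteq> V"
    using \<open>J \<subseteq> V\<close> by (auto simp: closed_nbhd_def)
  ultimately obtain u where u: "u \<in> V" "u \<notin> closed_nbhd V E J"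
    by blast
  let ?Nu = "insert u {w \<in> V. E u w}"
  have "J \<subseteq> V - ?Nu"
    using u \<open>J \<subseteq> V\<close> G by (auto simp: closed_nbhd_def simple_graph_def)
  then have "card J \<le> card V - card ?Nu"
    using fin card_mono[of "V - ?Nu" J] card_Diff_subset[of ?Nu V] u(1)
    by (auto intro: finite_subset)
  moreover have "card ?Nu = Suc (degree V E u)"
    using fin u(1) irrefl by (simp add: degree_def)
  moreover have "min_degree V E \<le> degree V E u"
    using fin u(1) by (rule min_degree_le_degree)
  ultimately show False
    using card_J by linarith
qed

theorem corollary2:
  fixes V :: "'a set" and E :: "'a \<Rightarrow> 'a \<Rightarrow> bool" and p :: "'a \<Rightarrow> real"
  assumes "simple_graph V E"
    and "card V \<ge> 1"
    and "min_degree V E \<ge> 1"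
    and "\<forall>v\<in>V. 0 \<le> p v \<and> p v \<le> 1"
  shows "DRel V E p =
    (\<Sum>J\<in>{J. J \<subseteq> V \<and> card J \<le> card V - min_degree V E}.
        (-1) ^ card J * (\<Prod>v\<in>closed_nbhd V E J. 1 - p v))
    + (-1) ^ (card V - min_degree V E + 1) * real (card V - 1 choose (min_degree V E - 1))
        * (\<Prod>v\<in>V. 1 - p v)"
proof -
  have fin: "finite V" and sym: "\<forall>u\<in>V. \<forall>v\<in>V. E u v \<longleftrightarrow> E v u" and "V \<noteq> {}"
    using assms(1,2) by (auto simp: simple_graph_def)
  define m where "m = card V - min_degree V E"
  let ?f = "\<lambda>J. (-1::real) ^ card J * (\<Prod>v\<in>closed_nbhd V E J. 1 - p v)"
  have "card V - 1 choose m = card V - 1 choose (min_degree V E - 1)"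
    using binomial_symmetric[of m "card V - 1"] assms(3)
      min_degree_le_card_minus_one[OF assms(1) \<open>V \<noteq> {}\<close>]
    by (simp add: m_def)
  moreover have "(\<Sum>J | J \<subseteq> V \<and> m < card J. ?f J)
      = (\<Sum>J | J \<subseteq> V \<and> m < card J. (-1::real) ^ card J) * (\<Prod>v\<in>V. 1 - p v)"
    unfolding sum_distrib_right
    by (intro sum.cong) (auto simp: m_def closed_nbhd_eq_if_card_gt[OF assms(1)])
  ultimately have "(\<Sum>J | J \<subseteq> V \<and> m < card J. ?f J)
      = (-1) ^ (m + 1) * real (card V - 1 choose (min_degree V E - 1)) * (\<Prod>v\<in>V. 1 - p v)"
    using sum_neg_one_power_card_subsets_gt[OF fin \<open>V \<noteq> {}\<close>, of m] by simp
  moreover have "DRel V E p = (\<Sum>J | J \<subseteq> V \<and> card J \<le> m. ?f J) + (\<Sum>J | J \<subseteq> V \<and> m < card J. ?f J)"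
    using DRel_inclusion_exclusion[OF fin sym] sum_Pow_split_card[OF fin] by simp
  ultimately show ?thesis
    by (simp add: m_def)
qed

end
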